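(* Let $s\geq 1$ and $n\geq 2s$ be integers, and let $G^*=K_1\vee(K_{n-2}\cup K_1)$. (i) If $n\geq 2s+2$, then $\lambda_1(D(G^* ))\le \lambda_1(D(K_s\vee(K_{n-2s}\cup sK_1)))$, with equality if and only if $s=1$. (ii) If $n=2s+1$, then $\lambda_1(D(G^* ))\le \lambda_1(D(S_{n,\frac{n-1}{2}}))$, with equality if and only if $n=3$. (iii) If $n=2s$ and $n\geq 10$, then $\lambda_1(D(G^* ))<\lambda_1(D(S_{n,\frac{n}{2}}))$. (iv) If $n=2s$ and $2\le n\le 8$, then $\lambda_1(D(S_{n,\frac{n}{2}}))\le \lambda_1(D(G^* ))$, with equality if and only if $n=2$.
   Context: All graphs are finite, simple, undirected. For a connected graph $G$, $D(G)$ is its distance matrix (entry $(i,j)$ is the distance between $v_i$ and $v_j$) and $\lambda_1(D(G))$ its largest eigenvalue. $G\cup H$ is disjoint union, $G\vee H$ the join (disjoint union plus all edges between the two vertex sets), $tK_1$ the edgeless graph on $t$ vertices, $K_0$ the empty graph, and $S_{n,k}=K_k\vee(n-k)K_1$. *)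

theory Defs
  imports "Jordan_Normal_Form.Char_Poly"
begin

text \<open>A finite simple graph on the vertex set {0..<n}, given by its order n and a
 (symmetric, irreflexive) adjacency predicate, only meaningful on vertices below n.\<close>
type_synonym graph = "nat \<times> (nat \<Rightarrow> nat \<Rightarrow> bool)"

definition order :: "graph \<Rightarrow> nat" where "order G = fst G"
definition adj :: "graph \<Rightarrow> nat \<Rightarrow> nat \<Rightarrow> bool" where
  "adj G i j = (i < fst G \<and> j < fst G \<and> snd G i j)"

definition complete :: "nat \<Rightarrow> graph" where
  "complete k = (k, \<lambda>i j. i \<noteq> j)"

definition edgeless :: "nat \<Rightarrow> graph" where
  "edgeless t = (t, \<lambda>i j. False)"

definition gunion :: "graph \<Rightarrow> graph \<Rightarrow> graph" where
  "gunion G H = (order G + order H,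
     \<lambda>i j. (i < order G \<and> j < order G \<and> adj G i j) \<or>
           (order G \<le> i \<and> order G \<le> j \<and> adj H (i - order G) (j - order G)))"

definition gjoin :: "graph \<Rightarrow> graph \<Rightarrow> graph" where
  "gjoin G H = (order G + order H,
     \<lambda>i j. snd (gunion G H) i j \<or>
           (i < order G \<and> order G \<le> j \<and> j < order G + order H) \<or>
           (j < order G \<and> order G \<le> i \<and> i < order G + order H))"

fun walk :: "graph \<Rightarrow> nat \<Rightarrow> nat \<Rightarrow> nat \<Rightarrow> bool" where
  "walk G 0 i j = (i = j \<and> i < order G)"
| "walk G (Suc k) i j = (\<exists>m. adj G i m \<and> walk G k m j)"

text \<open>graph distance (length of a shortest walk); used only for connected graphs\<close>
definition gdist :: "graph \<Rightarrow> nat \<Rightarrow> nat \<Rightarrow> nat" where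
  "gdist G i j = (LEAST k. walk G k i j)"

definition connected_graph :: "graph \<Rightarrow> bool" where
  "connected_graph G = (\<forall>i<order G. \<forall>j<order G. \<exists>k. walk G k i j)"

definition dist_matrix :: "graph \<Rightarrow> real mat" where
  "dist_matrix G = mat (order G) (order G) (\<lambda>(i,j). real (gdist G i j))"

text \<open>largest eigenvalue \<lambda>_1 of a real matrix (all eigenvalues of D(G) are real)\<close>
definition lambda1 :: "real mat \<Rightarrow> real" where
  "lambda1 A = Max {k. eigenvalue A k}"

definition Gstar :: "nat \<Rightarrow> graph" where
  "Gstar n = gjoin (complete 1) (gunion (complete (n - 2)) (complete 1))"

definition S :: "nat \<Rightarrow> nat \<Rightarrow> graph" where
  "S n k = gjoin (complete k) (edgeless (n - k))"

end

theory Submission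
  imports Defs
begin

text \<open>All graphs in the statement are of the form H(s,t) = K_s \<or> (K_t \<union> sK_1), of diameter two:
  G* = H(1,n-2), the graph of (i) is H(s,n-2s), and S_{2s+1,s} = H(s,1), S_{2s,s} = H(s,0).
  The partition of H(s,t) into K_s, K_t and sK_1 is equitable, so every root of the characteristic
  polynomial q_{s,t} of the 3x3 quotient matrix is an eigenvalue of D(H(s,t)), with an eigenvector
  constant on the classes; when that eigenvector is positive, the root is \<lambda>_1 (Collatz-Wielandt).
  Against G* of the same order, q_{s,t} = q_{1,2s+t-2} + (s-1) r_{s,t} with r_{s,t} negative at
  \<lambda>_1(D(G*)), so q_{s,t} has a larger root. For t = 0 the cubic is (m+1) times a quadratic, and for
  2s \<in> {4,6,8} an explicit rational point separates the two spectral radii.\<close>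

lemma eigenvalues_finite:
  assumes A: "(A :: real mat) \<in> carrier_mat n n"
  shows "finite {k. eigenvalue A k}"
proof -
  have "char_poly A \<noteq> 0" using degree_monic_char_poly[OF A] by auto
  then have "finite {k. poly (char_poly A) k = 0}" by (rule poly_roots_finite)
  then show ?thesis using eigenvalue_root_char_poly[OF A] by simp
qed

lemma eigenvalue_le_lambda1:
  assumes "(A :: real mat) \<in> carrier_mat n n" and "eigenvalue A k"
  shows "k \<le> lambda1 A"
  unfolding lambda1_def using eigenvalues_finite[OF assms(1)] assms(2) by (intro Max_ge) auto

lemma mult_mat_vec_nth:
  "A \<in> carrier_mat n n \<Longrightarrow> v \<in> carrier_vec n \<Longrightarrow> i < n \<Longrightarrow>
   (A *\<^sub>v v) $ i = (\<Sum>j<n. A $$ (i,j) * v $ j)"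
  by (auto simp: scalar_prod_def lessThan_atLeast0 intro!: sum.cong)

lemma collatz_wielandt_upper_bound:
  fixes A :: "real mat"
  assumes A: "A \<in> carrier_mat n n" and nonneg: "\<And>i j. i < n \<Longrightarrow> j < n \<Longrightarrow> A $$ (i,j) \<ge> 0"
    and x: "x \<in> carrier_vec n" and pos: "\<And>i. i < n \<Longrightarrow> x $ i > 0"
    and super: "\<And>i. i < n \<Longrightarrow> (A *\<^sub>v x) $ i \<le> c * x $ i"
    and "eigenvalue A k"
  shows "k \<le> c"
proof -
  obtain v where v: "v \<in> carrier_vec n" "v \<noteq> 0\<^sub>v n" "A *\<^sub>v v = k \<cdot>\<^sub>v v"
    using assms(6) A unfolding eigenvalue_def eigenvector_def by auto
  define r where "r j = \<bar>v $ j\<bar> / x $ j" for j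
  obtain j0 where j0: "j0 < n" "v $ j0 \<noteq> 0" using v by (auto simp: vec_eq_iff)
  define t where "t = Max (r ` {..<n})"
  have "t \<in> r ` {..<n}" unfolding t_def using j0 by (intro Max_in) auto
  then obtain i where i: "i < n" "r i = t" by auto
  have r_le: "r j \<le> t" if "j < n" for j unfolding t_def using that by (intro Max_ge) auto
  have "r j0 > 0" using pos[OF j0(1)] j0 unfolding r_def by auto
  then have t_pos: "t > 0" using r_le[OF j0(1)] by linarith
  have v_le: "\<bar>v $ j\<bar> \<le> t * x $ j" if "j < n" for j
    using r_le[OF that] pos[OF that] unfolding r_def by (simp add: divide_le_eq)
  have v_i: "\<bar>v $ i\<bar> = t * x $ i" using i pos[OF i(1)] unfolding r_def by auto
  have "\<bar>k\<bar> * \<bar>v $ i\<bar> = \<bar>(A *\<^sub>v v) $ i\<bar>" using v i by (simp add: abs_mult)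
  also have "\<dots> = \<bar>\<Sum>j<n. A $$ (i,j) * v $ j\<bar>" using mult_mat_vec_nth[OF A v(1) i(1)] by simp
  also have "\<dots> \<le> (\<Sum>j<n. A $$ (i,j) * \<bar>v $ j\<bar>)"
    by (rule order_trans[OF sum_abs]) (auto simp: abs_mult nonneg i)
  also have "\<dots> \<le> (\<Sum>j<n. A $$ (i,j) * (t * x $ j))"
    by (intro sum_mono mult_left_mono) (auto simp: v_le nonneg i)
  also have "\<dots> = t * (A *\<^sub>v x) $ i" using mult_mat_vec_nth[OF A x i(1)]
    by (simp add: sum_distrib_left algebra_simps)
  also have "\<dots> \<le> t * (c * x $ i)" using super[OF i(1)] t_pos by simp
  finally have "\<bar>k\<bar> * (t * x $ i) \<le> c * (t * x $ i)" using v_i by (simp add: algebra_simps)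
  then have "\<bar>k\<bar> \<le> c" using t_pos pos[OF i(1)] by (simp add: mult_le_cancel_right)
  then show ?thesis by simp
qed

lemma lambda1_eq_of_positive_eigenvector:
  fixes A :: "real mat"
  assumes A: "A \<in> carrier_mat n n" and nonneg: "\<And>i j. i < n \<Longrightarrow> j < n \<Longrightarrow> A $$ (i,j) \<ge> 0"
    and x: "x \<in> carrier_vec n" and pos: "\<And>i. i < n \<Longrightarrow> x $ i > 0" and "n > 0"
    and eig: "A *\<^sub>v x = \<mu> \<cdot>\<^sub>v x"
  shows "lambda1 A = \<mu>"
proof -
  have "eigenvalue A \<mu>" unfolding eigenvalue_def eigenvector_def
    using A x eig pos[OF \<open>n > 0\<close>] \<open>n > 0\<close> by (intro exI[of _ x]) (auto simp: vec_eq_iff)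
  moreover have "k \<le> \<mu>" if "eigenvalue A k" for k
    using collatz_wielandt_upper_bound[OF A nonneg x pos _ that] eig x by auto
  ultimately show ?thesis unfolding lambda1_def using eigenvalues_finite[OF A]
    by (intro Max_eqI) auto
qed

lemma gdist_universal_vertex:
  assumes u: "u < order G" and univ: "\<And>v. v < order G \<Longrightarrow> v \<noteq> u \<Longrightarrow> adj G u v \<and> adj G v u"
    and ij: "i < order G" "j < order G"
  shows "gdist G i j = (if i = j then 0 else if adj G i j then 1 else 2)"
proof -
  have walk1: "walk G 1 i j \<longleftrightarrow> adj G i j" by (auto simp: adj_def order_def)
  consider "i = j" | "i \<noteq> j" "adj G i j" | "i \<noteq> j" "\<not> adj G i j" by blast
  then show ?thesis
  proof cases
    case 1
    then show ?thesis using ij by (simp add: gdist_def)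
  next
    case 2
    have "(LEAST k. walk G k i j) = 1"
    proof (rule Least_equality)
      show "walk G 1 i j" using 2 walk1 by simp
      show "1 \<le> k" if "walk G k i j" for k using that 2 by (cases k) auto
    qed
    then show ?thesis using 2 by (simp add: gdist_def)
  next
    case 3
    then have "i \<noteq> u" "j \<noteq> u" using univ ij by auto
    then have "walk G 2 i j"
      using univ ij u by (auto simp: numeral_2_eq_2 adj_def order_def intro!: exI[of _ u])
    moreover have "\<not> walk G k i j" if "k < 2" for k
      using that 3 walk1 by (auto simp: less_2_cases_iff)
    ultimately have "(LEAST k. walk G k i j) = 2"
      by (intro Least_equality) (auto simp: not_less[symmetric])
    then show ?thesis using 3 by (simp add: gdist_def)
  qed
qed

text \<open>Vertices below s form K_s, the next t form K_t and the last s form sK_1.\<close>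
definition hadj :: "nat \<Rightarrow> nat \<Rightarrow> nat \<Rightarrow> nat \<Rightarrow> bool" where
  "hadj s t i j \<longleftrightarrow> i < s \<or> j < s \<or> (i < s + t \<and> j < s + t)"

definition hdist :: "nat \<Rightarrow> nat \<Rightarrow> real mat" where
  "hdist s t = mat (2*s+t) (2*s+t) (\<lambda>(i,j). if i = j then 0 else if hadj s t i j then 1 else 2)"

lemma dist_matrix_eq_hdist:
  assumes order: "order G = 2*s+t" and "s \<ge> 1"
    and adj: "\<And>i j. adj G i j \<longleftrightarrow> i < 2*s+t \<and> j < 2*s+t \<and> i \<noteq> j \<and> hadj s t i j"
  shows "dist_matrix G = hdist s t"
proof -
  have "gdist G i j = (if i = j then 0 else if hadj s t i j then 1 else 2)"
    if "i < 2*s+t" "j < 2*s+t" for i j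
    using gdist_universal_vertex[of 0 G i j] that order adj \<open>s \<ge> 1\<close> by (auto simp: hadj_def)
  then show ?thesis unfolding dist_matrix_def hdist_def order by (intro eq_matI) auto
qed

lemma adj_join_clique_union:
  "adj (gjoin (complete s) (gunion (complete t) (edgeless u))) i j \<longleftrightarrow>
     i < s+t+u \<and> j < s+t+u \<and> i \<noteq> j \<and> (i < s \<or> j < s \<or> (i < s + t \<and> j < s + t))"
  unfolding adj_def gjoin_def gunion_def order_def complete_def edgeless_def
  by (simp; cases "i < s"; cases "j < s"; force simp: less_diff_conv2 not_less)

lemma order_join_clique_union:
  "order (gjoin (complete s) (gunion (complete t) (edgeless u))) = s+t+u"
  by (simp add: gjoin_def gunion_def order_def complete_def edgeless_def)

lemma dist_matrix_join_clique_union: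
  "s \<ge> 1 \<Longrightarrow> dist_matrix (gjoin (complete s) (gunion (complete t) (edgeless s))) = hdist s t"
  by (rule dist_matrix_eq_hdist) (auto simp: order_join_clique_union adj_join_clique_union hadj_def)

lemma Gstar_eq_join_clique_union:
  "Gstar n = gjoin (complete 1) (gunion (complete (n - 2)) (edgeless 1))"
  unfolding Gstar_def gunion_def adj_def complete_def edgeless_def order_def
  by (intro arg_cong[where f = "gjoin _"]) (auto simp: fun_eq_iff)

lemma S_eq_join_clique_union:
  assumes "2*s \<le> n" "n \<le> 2*s + 1"
  shows "S n s = gjoin (complete s) (gunion (complete (n - 2*s)) (edgeless s))"
  unfolding S_def gunion_def adj_def complete_def edgeless_def order_def
  using assms by (intro arg_cong[where f = "gjoin _"]) (auto simp: fun_eq_iff)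

definition block_vec :: "nat \<Rightarrow> nat \<Rightarrow> real \<Rightarrow> real \<Rightarrow> real \<Rightarrow> real vec" where
  "block_vec s t x y z = vec (2*s+t) (\<lambda>i. if i < s then x else if i < s+t then y else z)"

lemma sum_const_except:
  fixes c :: real
  shows "(\<Sum>j\<in>{a..<b}. if j = i then 0 else c) =
     (if a \<le> i \<and> i < b then (real (b-a) - 1) * c else real (b-a) * c)"
proof -
  have "(\<Sum>j\<in>{a..<b}. if j = i then 0 else c) = (\<Sum>j\<in>{a..<b}. c - (if j = i then c else 0))"
    by (intro sum.cong) auto
  also have "\<dots> = real (b-a) * c - (if a \<le> i \<and> i < b then c else 0)"
    by (simp add: sum_subtractf)
  finally show ?thesis by (auto simp: algebra_simps)
qed

lemma hdist_carrier: "hdist s t \<in> carrier_mat (2*s+t) (2*s+t)"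
  by (simp add: hdist_def)

lemma hdist_nonneg: "0 \<le> hdist s t $$ (i,j)" if "i < 2*s+t" "j < 2*s+t"
  using that by (simp add: hdist_def)

lemma block_vec_carrier: "block_vec s t x y z \<in> carrier_vec (2*s+t)"
  by (simp add: block_vec_def)

lemma hdist_mult_block_vec:
  assumes i: "i < 2*s+t"
  shows "(hdist s t *\<^sub>v block_vec s t x y z) $ i =
    (if i < s then (real s - 1)*x + real t*y + real s*z
     else if i < s+t then real s*x + (real t - 1)*y + 2*real s*z
     else real s*x + 2*real t*y + 2*(real s - 1)*z)"
proof -
  define N where "N = 2*s+t"
  define f where "f j = hdist s t $$ (i,j) * block_vec s t x y z $ j" for j
  have f: "f j = (if j = i then 0 else (if hadj s t i j then 1 else 2) *
      (if j < s then x else if j < s+t then y else z))" if "j < N" for j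
    using that i unfolding f_def hdist_def block_vec_def N_def by auto
  have "(hdist s t *\<^sub>v block_vec s t x y z) $ i = (\<Sum>j<N. f j)"
    unfolding f_def N_def by (rule mult_mat_vec_nth[OF hdist_carrier block_vec_carrier i])
  also have "\<dots> = (\<Sum>j\<in>{0..<s}. f j) + (\<Sum>j\<in>{s..<s+t}. f j) + (\<Sum>j\<in>{s+t..<N}. f j)"
    unfolding N_def lessThan_atLeast0 by (simp add: sum.atLeastLessThan_concat)
  also have "(\<Sum>j\<in>{0..<s}. f j) = (\<Sum>j\<in>{0..<s}. if j = i then 0 else x)"
    by (intro sum.cong) (auto simp: f N_def hadj_def)
  also have "(\<Sum>j\<in>{s..<s+t}. f j) =
      (\<Sum>j\<in>{s..<s+t}. if j = i then 0 else (if i < s+t then 1 else 2) * y)"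
    by (intro sum.cong) (auto simp: f N_def hadj_def)
  also have "(\<Sum>j\<in>{s+t..<N}. f j) = (\<Sum>j\<in>{s+t..<N}. if j = i then 0 else (if i < s then 1 else 2) * z)"
    by (intro sum.cong) (auto simp: f N_def hadj_def)
  finally show ?thesis
    unfolding sum_const_except using i unfolding N_def by (auto simp: algebra_simps of_nat_diff)
qed

lemma hdist_block_vec_eigenvector:
  assumes "\<mu> * x = (real s - 1)*x + real t*y + real s*z"
    and "t > 0 \<Longrightarrow> \<mu> * y = real s*x + (real t - 1)*y + 2*real s*z"
    and "\<mu> * z = real s*x + 2*real t*y + 2*(real s - 1)*z"
  shows "hdist s t *\<^sub>v block_vec s t x y z = \<mu> \<cdot>\<^sub>v block_vec s t x y z"
proof (rule eq_vecI)
  fix i assume "i < dim_vec (\<mu> \<cdot>\<^sub>v block_vec s t x y z)"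
  then have "i < 2*s+t" by (simp add: block_vec_def)
  then show "(hdist s t *\<^sub>v block_vec s t x y z) $ i = (\<mu> \<cdot>\<^sub>v block_vec s t x y z) $ i"
    unfolding hdist_mult_block_vec[OF \<open>i < 2*s+t\<close>] using assms by (auto simp: block_vec_def)
qed (simp add: block_vec_def hdist_def)

text \<open>q_{s,t}(m) = det(m I - B) for the quotient matrix B = [[s-1, t, s], [s, t-1, 2s], [s, 2t, 2s-2]]
  of hdist s t; qpoly0 is the same for the 2x2 quotient matrix [[s-1, s], [s, 2s-2]] when t = 0.\<close>
definition qpoly :: "real \<Rightarrow> real \<Rightarrow> real \<Rightarrow> real" where
  "qpoly s t m = (m-s+1)*(m-t+1)*(m-2*s+2)
     - 4*s*t*(m-s+1) - s*t*(m-2*s+2) - 4*s^2*t - s^2*(m-t+1)"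

definition qpoly0 :: "real \<Rightarrow> real \<Rightarrow> real" where
  "qpoly0 s m = (m-s+1)*(m-2*s+2) - s^2"

lemma qpoly_0: "qpoly s 0 m = (m + 1) * qpoly0 s m"
  unfolding qpoly_def qpoly0_def by (simp add: algebra_simps power2_eq_square)

definition root_vec :: "nat \<Rightarrow> nat \<Rightarrow> real \<Rightarrow> real vec" where
  "root_vec s t \<mu> =
     block_vec s t (real t * (\<mu> + 2)) (qpoly0 (real s) \<mu>) (real t * (2*\<mu> - real s + 2))"

lemma hdist_mult_root_vec:
  assumes "qpoly (real s) (real t) \<mu> = 0"
  shows "hdist s t *\<^sub>v root_vec s t \<mu> = \<mu> \<cdot>\<^sub>v root_vec s t \<mu>"
  unfolding root_vec_def
proof (rule hdist_block_vec_eigenvector)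
  show "\<mu> * qpoly0 (real s) \<mu> = real s * (real t * (\<mu> + 2)) + (real t - 1) * qpoly0 (real s) \<mu>
      + 2 * real s * (real t * (2*\<mu> - real s + 2))"
    using assms unfolding qpoly_def qpoly0_def by (simp add: algebra_simps power2_eq_square)
qed (simp_all add: qpoly0_def algebra_simps power2_eq_square)

lemma root_vec_pos:
  assumes "s \<ge> 1" "t \<ge> 1" "real s - 1 \<le> \<mu>" "0 < qpoly0 (real s) \<mu>" "i < 2*s+t"
  shows "0 < root_vec s t \<mu> $ i"
  using assms by (simp add: root_vec_def block_vec_def)

lemma qpoly_at_twice_order:
  "qpoly s t (2*(2*s+t)) =
     20*s^3 + 27*s^2*t + 37*s^2 + 16*s*t^2 + 36*s*t + 16*s + 4*t^3 + 10*t^2 + 8*t + 2"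
  unfolding qpoly_def by (simp add: algebra_simps power2_eq_square power3_eq_cube)

lemma qpoly_root_above:
  assumes "a \<le> 2*(2*real s + real t)" "qpoly s t a \<le> 0"
  shows "\<exists>\<mu>\<ge>a. \<mu> \<le> 2*(2*real s + real t) \<and> qpoly s t \<mu> = 0"
proof (rule IVT')
  show "qpoly s t a \<le> 0" by (fact assms(2))
  show "0 \<le> qpoly s t (2*(2*real s + real t))" unfolding qpoly_at_twice_order by simp
  show "continuous_on {a..2*(2*real s + real t)} (qpoly s t)"
    unfolding qpoly_def by (intro continuous_intros)
qed (fact assms(1))

definition qpoly_corr :: "real \<Rightarrow> real \<Rightarrow> real \<Rightarrow> real" where
  "qpoly_corr s t m = (t+1)*s + 3 - t - m*(m - s - 4 + 2*t)"

lemma qpoly_split: "qpoly s t m = qpoly 1 (2*s+t-2) m + (s-1) * qpoly_corr s t m"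
  unfolding qpoly_def qpoly_corr_def by (simp add: algebra_simps power2_eq_square)

lemma qpoly_corr_neg:
  fixes s t m :: real
  assumes "2 \<le> s" "1 \<le> t" "2*s+t+1/4 \<le> m"
  shows "qpoly_corr s t m < 0"
proof -
  have "(2*s+t+1/4) * (s+3*t-15/4) \<le> m * (m - s - 4 + 2*t)"
    using assms by (intro mult_mono) auto
  moreover have "(2*s+t+1/4) * (s+3*t-15/4) - ((t+1)*s + 3 - t)
      = 2*(s*s) + 6*(s*t) + 3*(t*t) - 33/4*s - 2*t - 63/16"
    by (simp add: algebra_simps)
  moreover have "s*s \<ge> 2*s" "s*t \<ge> s" "t*t \<ge> t"
    using assms by (simp_all add: mult_right_mono)
  ultimately show ?thesis using assms unfolding qpoly_corr_def by linarith
qed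

lemma qpoly_corr0_neg:
  fixes s m :: real
  assumes "5 \<le> s" "2*s \<le> m"
  shows "qpoly_corr s 0 m < 0"
proof -
  have "(2*s) * 1 \<le> m * (m - s - 4)"
    using assms by (intro mult_mono) auto
  then show ?thesis using assms unfolding qpoly_corr_def by simp
qed

lemma qpoly1_at_order: "4 \<le> n \<Longrightarrow> qpoly 1 (n-2) n \<le> 0"
proof -
  assume "4 \<le> n"
  then have "4 * 1 \<le> n * (n - 3)" by (intro mult_mono) auto
  moreover have "qpoly 1 (n-2) n = 5 - 2 * (n * (n - 3))"
    unfolding qpoly_def by (simp add: algebra_simps power2_eq_square power3_eq_cube)
  ultimately show ?thesis by linarith
qed

lemma qpoly1_above_order: "5 \<le> n \<Longrightarrow> qpoly 1 (n-2) (n + 1/4) \<le> 0"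
proof -
  assume "5 \<le> n"
  then have "5 * (19/8) \<le> n * (7/4 * n - 51/8)" by (intro mult_mono) auto
  moreover have "qpoly 1 (n-2) (n + 1/4) = 477/64 - n * (7/4 * n - 51/8)"
    unfolding qpoly_def by (simp add: power2_eq_square power3_eq_cube field_simps)
  ultimately show ?thesis by linarith
qed

lemma eigenvalue_hdist_root:
  assumes "s \<ge> 1" "t \<ge> 1" "0 \<le> \<mu>" "qpoly (real s) (real t) \<mu> = 0"
  shows "eigenvalue (hdist s t) \<mu>"
proof -
  have "root_vec s t \<mu> $ 0 \<noteq> 0" using assms by (simp add: root_vec_def block_vec_def)
  then have "root_vec s t \<mu> \<noteq> 0\<^sub>v (2*s+t)" using assms(1) by auto
  then show ?thesis unfolding eigenvalue_def eigenvector_def using hdist_mult_root_vec[OF assms(4)]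
    by (intro exI[of _ "root_vec s t \<mu>"]) (auto simp: hdist_def root_vec_def block_vec_carrier)
qed

lemma lambda1_hdist_root:
  assumes "s \<ge> 1" "t \<ge> 1" "real s - 1 \<le> \<mu>" "0 < qpoly0 (real s) \<mu>" "qpoly (real s) (real t) \<mu> = 0"
  shows "lambda1 (hdist s t) = \<mu>"
  by (rule lambda1_eq_of_positive_eigenvector[OF hdist_carrier hdist_nonneg _ root_vec_pos _
        hdist_mult_root_vec[OF assms(5)]])
    (use assms in \<open>auto simp: root_vec_def block_vec_carrier\<close>)

lemma lambda1_hdist0_root:
  assumes "s \<ge> 1" "real s - 1 < \<mu>" "qpoly0 (real s) \<mu> = 0"
  shows "lambda1 (hdist s 0) = \<mu>"
proof (rule lambda1_eq_of_positive_eigenvector[OF hdist_carrier hdist_nonneg block_vec_carrier])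
  show "hdist s 0 *\<^sub>v block_vec s 0 (real s) 0 (\<mu> - real s + 1)
      = \<mu> \<cdot>\<^sub>v block_vec s 0 (real s) 0 (\<mu> - real s + 1)"
    by (rule hdist_block_vec_eigenvector)
      (use assms(3) in \<open>auto simp: qpoly0_def algebra_simps power2_eq_square\<close>)
qed (use assms in \<open>auto simp: block_vec_def\<close>)

lemma lambda1_hdist_gt:
  assumes "s \<ge> 1" "t \<ge> 1" "0 \<le> a" "a \<le> 2*(2*real s + real t)" "qpoly s t a < 0"
  shows "a < lambda1 (hdist s t)"
proof -
  obtain \<mu> where \<mu>: "a \<le> \<mu>" "qpoly s t \<mu> = 0"
    using qpoly_root_above[of a s t] assms(4,5) by auto
  have "a < \<mu>" using \<mu> assms(5) by (cases "a = \<mu>") auto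
  also have "\<mu> \<le> lambda1 (hdist s t)"
    using eigenvalue_le_lambda1[OF hdist_carrier eigenvalue_hdist_root] \<mu> assms by auto
  finally show ?thesis .
qed

lemma lambda1_hdist0_gt:
  assumes "s \<ge> 1" "real s - 1 < a" "a \<le> 4 * real s" "qpoly0 s a < 0"
  shows "a < lambda1 (hdist s 0)"
proof -
  have "0 < a + 1" using assms by simp
  then have "qpoly s 0 a < 0" using assms(4) by (simp add: qpoly_0 mult_pos_neg)
  then obtain \<mu> where \<mu>: "a \<le> \<mu>" "qpoly s 0 \<mu> = 0"
    using qpoly_root_above[of a s 0] assms(3) by auto
  then have "qpoly0 s \<mu> = 0" using \<open>0 < a + 1\<close> by (simp add: qpoly_0)
  then have "lambda1 (hdist s 0) = \<mu>" using lambda1_hdist0_root assms \<mu> by auto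
  moreover have "a \<noteq> \<mu>" using \<open>qpoly0 s \<mu> = 0\<close> assms(4) by auto
  ultimately show ?thesis using \<mu> by auto
qed

lemma lambda1_Gstar_root:
  assumes "t \<ge> 1" "1 < a" "a \<le> 2*(real t + 2)" "qpoly 1 t a \<le> 0"
  shows "\<exists>\<mu>\<ge>a. \<mu> \<le> 2*(real t + 2) \<and> qpoly 1 t \<mu> = 0 \<and> lambda1 (hdist 1 t) = \<mu>"
proof -
  obtain \<mu> where \<mu>: "a \<le> \<mu>" "\<mu> \<le> 2*(real t + 2)" "qpoly 1 t \<mu> = 0"
    using qpoly_root_above[of a 1 t] assms by auto
  have "1 * 1 < \<mu> * \<mu>" using \<mu> assms by (intro mult_strict_mono) auto
  then have "lambda1 (hdist 1 t) = \<mu>"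
    using lambda1_hdist_root[of 1 t \<mu>] \<mu> assms by (simp add: qpoly0_def power2_eq_square)
  then show ?thesis using \<mu> by auto
qed

lemma lambda1_Gstar_lt_hdist:
  assumes "2 \<le> s" "1 \<le> t"
  shows "lambda1 (hdist 1 (2*s+t-2)) < lambda1 (hdist s t)"
proof -
  define n where "n = 2 * real s + real t"
  have n: "real (2*s+t-2) = n - 2" using assms by (simp add: n_def of_nat_diff)
  have "1 \<le> 2*s+t-2" using assms by simp
  then obtain \<mu> where \<mu>: "n + 1/4 \<le> \<mu>" "\<mu> \<le> 2*n" "qpoly 1 (n-2) \<mu> = 0"
      "lambda1 (hdist 1 (2*s+t-2)) = \<mu>"
    using lambda1_Gstar_root[of "2*s+t-2" "n + 1/4"] qpoly1_above_order[of n] assms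
    unfolding n by (auto simp: n_def)
  have "qpoly s t \<mu> < 0"
    using qpoly_split[of s t \<mu>] qpoly_corr_neg[of s t \<mu>] \<mu> assms by (simp add: n_def mult_pos_neg)
  then show ?thesis using lambda1_hdist_gt[of s t \<mu>] \<mu> assms by (simp add: n_def)
qed

lemma lambda1_Gstar_lt_hdist0:
  assumes "5 \<le> s"
  shows "lambda1 (hdist 1 (2*s-2)) < lambda1 (hdist s 0)"
proof -
  have n: "real (2*s-2) = 2 * real s - 2" using assms by (simp add: of_nat_diff)
  have "1 \<le> 2*s-2" using assms by simp
  then obtain \<mu> where \<mu>: "2 * real s \<le> \<mu>" "\<mu> \<le> 4 * real s" "qpoly 1 (2 * real s - 2) \<mu> = 0"
      "lambda1 (hdist 1 (2*s-2)) = \<mu>"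
    using lambda1_Gstar_root[of "2*s-2" "2 * real s"] qpoly1_at_order[of "2 * real s"] assms
    unfolding n by auto
  have "qpoly s 0 \<mu> < 0"
    using qpoly_split[of s 0 \<mu>] qpoly_corr0_neg[of s \<mu>] \<mu> assms by (simp add: mult_pos_neg)
  moreover have "0 < \<mu> + 1" using \<mu> by simp
  ultimately have "qpoly0 s \<mu> < 0" by (simp add: qpoly_0 zero_less_mult_iff mult_less_0_iff)
  then show ?thesis using lambda1_hdist0_gt[of s \<mu>] \<mu> assms by simp
qed

lemma lambda1_hdist0_lt_Gstar_of_separating:
  assumes "2 \<le> s" "2 * real s \<le> c" "c \<le> 4 * real s"
    and "qpoly 1 (2 * real s - 2) c \<le> 0" "0 < qpoly0 s c"
  shows "lambda1 (hdist s 0) < lambda1 (hdist 1 (2*s-2))"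
proof -
  have n: "real (2*s-2) = 2 * real s - 2" using assms by (simp add: of_nat_diff)
  have "1 \<le> 2*s-2" using assms by simp
  then obtain \<mu> where "c \<le> \<mu>" "lambda1 (hdist 1 (2*s-2)) = \<mu>"
    using lambda1_Gstar_root[of "2*s-2" c] assms unfolding n by auto
  moreover obtain \<nu> where \<nu>: "real s \<le> \<nu>" "\<nu> \<le> c" "qpoly0 s \<nu> = 0"
  proof -
    have "qpoly0 s s = 2 - real s - real s ^ 2" by (simp add: qpoly0_def algebra_simps power2_eq_square)
    then have "qpoly0 s s \<le> 0" using assms zero_le_power2[of "real s"] by linarith
    moreover have "continuous_on {real s..c} (qpoly0 s)"
      unfolding qpoly0_def by (intro continuous_intros)
    ultimately show ?thesis using IVT'[of "qpoly0 s" "real s" 0 c] assms that by auto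
  qed
  moreover have "lambda1 (hdist s 0) = \<nu>" using lambda1_hdist0_root \<nu> assms by auto
  moreover have "\<nu> \<noteq> c" using \<nu> assms by auto
  ultimately show ?thesis by auto
qed

lemma lambda1_hdist0_lt_Gstar:
  assumes "2 \<le> s" "s \<le> 4"
  shows "lambda1 (hdist s 0) < lambda1 (hdist 1 (2*s-2))"
proof -
  consider "s = 2" | "s = 3" | "s = 4" using assms by force
  then show ?thesis
  proof cases
    case 1
    then show ?thesis by (intro lambda1_hdist0_lt_Gstar_of_separating[where c = 4])
      (auto simp: qpoly_def qpoly0_def power2_eq_square)
  next
    case 2
    then show ?thesis by (intro lambda1_hdist0_lt_Gstar_of_separating[where c = "25/4"])
      (auto simp: qpoly_def qpoly0_def power2_eq_square)
  next
    case 3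
    then show ?thesis by (intro lambda1_hdist0_lt_Gstar_of_separating[where c = "351/40"])
      (auto simp: qpoly_def qpoly0_def power2_eq_square)
  qed
qed

lemma le_and_eq_iff:
  fixes a b :: "'a :: linorder"
  assumes "P \<Longrightarrow> a = b" and "\<not> P \<Longrightarrow> a < b"
  shows "a \<le> b \<and> (a = b \<longleftrightarrow> P)"
  using assms by (cases P) auto

theorem lemma2p8:
  fixes s n :: nat
  assumes "s \<ge> 1" and "n \<ge> 2 * s"
  shows "(n \<ge> 2 * s + 2 \<longrightarrow>
            lambda1 (dist_matrix (Gstar n))
              \<le> lambda1 (dist_matrix (gjoin (complete s) (gunion (complete (n - 2 * s)) (edgeless s))))
          \<and> (lambda1 (dist_matrix (Gstar n))
              = lambda1 (dist_matrix (gjoin (complete s) (gunion (complete (n - 2 * s)) (edgeless s))))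
             \<longleftrightarrow> s = 1))
       \<and> (n = 2 * s + 1 \<longrightarrow>
            lambda1 (dist_matrix (Gstar n)) \<le> lambda1 (dist_matrix (S n ((n - 1) div 2)))
          \<and> (lambda1 (dist_matrix (Gstar n)) = lambda1 (dist_matrix (S n ((n - 1) div 2)))
             \<longleftrightarrow> n = 3))
       \<and> (n = 2 * s \<and> n \<ge> 10 \<longrightarrow>
            lambda1 (dist_matrix (Gstar n)) < lambda1 (dist_matrix (S n (n div 2))))
       \<and> (n = 2 * s \<and> 2 \<le> n \<and> n \<le> 8 \<longrightarrow>
            lambda1 (dist_matrix (S n (n div 2))) \<le> lambda1 (dist_matrix (Gstar n))
          \<and> (lambda1 (dist_matrix (S n (n div 2))) = lambda1 (dist_matrix (Gstar n))
             \<longleftrightarrow> n = 2))"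
proof -
  have D_Gstar: "dist_matrix (Gstar n) = hdist 1 (n - 2)"
    unfolding Gstar_eq_join_clique_union by (simp add: dist_matrix_join_clique_union)
  have D_H: "dist_matrix (gjoin (complete s) (gunion (complete (n - 2*s)) (edgeless s)))
      = hdist s (n - 2*s)"
    using dist_matrix_join_clique_union assms(1) .
  have D_S: "dist_matrix (S n s) = hdist s (n - 2*s)" if "n \<le> 2*s + 1"
    unfolding S_eq_join_clique_union[OF assms(2) that] D_H ..
  have odd: "lambda1 (hdist 1 (n - 2)) \<le> lambda1 (hdist s (n - 2*s))
      \<and> (lambda1 (hdist 1 (n - 2)) = lambda1 (hdist s (n - 2*s)) \<longleftrightarrow> s = 1)" if "2*s + 1 \<le> n"
    using lambda1_Gstar_lt_hdist[of s "n - 2*s"] that assms by (intro le_and_eq_iff) auto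
  have even_large: "lambda1 (hdist 1 (n - 2)) < lambda1 (hdist s 0)" if "n = 2*s" "10 \<le> n"
    using lambda1_Gstar_lt_hdist0[of s] that by auto
  have even_small: "lambda1 (hdist s 0) \<le> lambda1 (hdist 1 (n - 2))
      \<and> (lambda1 (hdist s 0) = lambda1 (hdist 1 (n - 2)) \<longleftrightarrow> n = 2)" if "n = 2*s" "n \<le> 8"
    using lambda1_hdist0_lt_Gstar[of s] that assms by (intro le_and_eq_iff) auto
  show ?thesis
    unfolding D_Gstar D_H using odd even_large even_small D_S by auto
qed

end
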